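(* Let $Q_{1}=(Q_{1,i})_{i\in[d]}$ and $Q_{2}=(Q_{2,i})_{i\in[d]}$ be nonnegative vectors with $Q_{1,i}+Q_{2,i}>0$ for all $i\in[d]$, let $I_0\subset[d]$ be the largest reference set (so that $Q_{1,i}=bQ_{2,i}$ for all $i\in I_0$ for some $b>0$, and every $i\notin I_0$ is differential with respect to $I_0$), and let $I_1=[d]\setminus I_0$. Run the following iterative procedure: set $U_{(0)}=\emptyset$, $V_{(0)}=[d]$; for $t=0,1,\ldots$, (a) compute $M(V_{(t)})=\mathrm{Median}\{R_i(V_{(t)}):i\in V_{(t)}\}$; (b) set $W_{(t)}=W^{+}(V_{(t)})\cup W^{-}(V_{(t)})$ if $M(V_{(t)})=0$, $W_{(t)}=W^{-}(V_{(t)})\cup W^{o}(V_{(t)})$ if $M(V_{(t)})>0$, and $W_{(t)}=W^{+}(V_{(t)})\cup W^{o}(V_{(t)})$ if $M(V_{(t)})<0$; (c) set $U_{(t+1)}=U_{(t)}\cup W_{(t)}$, $V_{(t+1)}=V_{(t)}\setminus W_{(t)}$, and stop if $W_{(t)}=\emptyset$. Let $T$ be the iteration at which the loop stops, and set $\hat I_0=V_{(T)}$, $\hat I_1=U_{(T)}$. If $|I_0|>d/2$, then $$T\le |I_1|+1,\qquad \hat I_0=I_0,\qquad \hat I_1=I_1.$$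
   Context: $[d]=\{1,\ldots,d\}$. $Q_{k,i}$ denotes the (known) expected relative abundance of component $i$ in population $k\in\{1,2\}$. A subset $I_0\subset[d]$ is a reference set if there exists $b>0$ with $Q_{1,i}=bQ_{2,i}$ for all $i\in I_0$; component $i$ is differential with respect to $I_0$ if $Q_{1,i}/\sum_{i'\in I_0}Q_{1,i'}\ne Q_{2,i}/\sum_{i'\in I_0}Q_{2,i'}$. For $I\subset[d]$ and $i\in I$, $R_i(I)=Q_{1,i}/\sum_{i'\in I}Q_{1,i'}-Q_{2,i}/\sum_{i'\in I}Q_{2,i'}$, and $W^{+}(I)=\{i\in I:R_i(I)>0\}$, $W^{-}(I)=\{i\in I:R_i(I)<0\}$, $W^{o}(I)=\{i\in I:R_i(I)=0\}$. *)

theory Defs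
  imports Complex_Main
begin

text \<open>Components are indexed by [d] = {1..d}; Q1 i, Q2 i are the expected relative abundances.\<close>

definition is_reference_set :: "(nat \<Rightarrow> real) \<Rightarrow> (nat \<Rightarrow> real) \<Rightarrow> nat set \<Rightarrow> bool" where
  "is_reference_set Q1 Q2 I0 \<longleftrightarrow> (\<exists>b>0. \<forall>i\<in>I0. Q1 i = b * Q2 i)"

definition is_differential :: "(nat \<Rightarrow> real) \<Rightarrow> (nat \<Rightarrow> real) \<Rightarrow> nat set \<Rightarrow> nat \<Rightarrow> bool" where
  "is_differential Q1 Q2 I0 i \<longleftrightarrow>
     Q1 i / (\<Sum>j\<in>I0. Q1 j) \<noteq> Q2 i / (\<Sum>j\<in>I0. Q2 j)"

definition Rval :: "(nat \<Rightarrow> real) \<Rightarrow> (nat \<Rightarrow> real) \<Rightarrow> nat set \<Rightarrow> nat \<Rightarrow> real" where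
  "Rval Q1 Q2 I i = Q1 i / (\<Sum>j\<in>I. Q1 j) - Q2 i / (\<Sum>j\<in>I. Q2 j)"

definition Wplus :: "(nat \<Rightarrow> real) \<Rightarrow> (nat \<Rightarrow> real) \<Rightarrow> nat set \<Rightarrow> nat set" where
  "Wplus Q1 Q2 I = {i\<in>I. Rval Q1 Q2 I i > 0}"

definition Wminus :: "(nat \<Rightarrow> real) \<Rightarrow> (nat \<Rightarrow> real) \<Rightarrow> nat set \<Rightarrow> nat set" where
  "Wminus Q1 Q2 I = {i\<in>I. Rval Q1 Q2 I i < 0}"

definition Wzero :: "(nat \<Rightarrow> real) \<Rightarrow> (nat \<Rightarrow> real) \<Rightarrow> nat set \<Rightarrow> nat set" where
  "Wzero Q1 Q2 I = {i\<in>I. Rval Q1 Q2 I i = 0}"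

definition median :: "real list \<Rightarrow> real" where
  "median xs = (let ys = sort xs; n = length ys in
     if odd n then ys ! (n div 2) else (ys ! (n div 2 - 1) + ys ! (n div 2)) / 2)"

definition Mval :: "(nat \<Rightarrow> real) \<Rightarrow> (nat \<Rightarrow> real) \<Rightarrow> nat set \<Rightarrow> real" where
  "Mval Q1 Q2 V = median (map (Rval Q1 Q2 V) (sorted_list_of_set V))"

definition Wstep :: "(nat \<Rightarrow> real) \<Rightarrow> (nat \<Rightarrow> real) \<Rightarrow> nat set \<Rightarrow> nat set" where
  "Wstep Q1 Q2 V =
     (if Mval Q1 Q2 V = 0 then Wplus Q1 Q2 V \<union> Wminus Q1 Q2 V
      else if Mval Q1 Q2 V > 0 then Wminus Q1 Q2 V \<union> Wzero Q1 Q2 V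
      else Wplus Q1 Q2 V \<union> Wzero Q1 Q2 V)"

fun UV :: "(nat \<Rightarrow> real) \<Rightarrow> (nat \<Rightarrow> real) \<Rightarrow> nat \<Rightarrow> nat \<Rightarrow> nat set \<times> nat set" where
  "UV Q1 Q2 d 0 = ({}, {1..d})"
| "UV Q1 Q2 d (Suc t) =
     (let (U, V) = UV Q1 Q2 d t; W = Wstep Q1 Q2 V in (U \<union> W, V - W))"

definition Uit :: "(nat \<Rightarrow> real) \<Rightarrow> (nat \<Rightarrow> real) \<Rightarrow> nat \<Rightarrow> nat \<Rightarrow> nat set" where
  "Uit Q1 Q2 d t = fst (UV Q1 Q2 d t)"

definition Vit :: "(nat \<Rightarrow> real) \<Rightarrow> (nat \<Rightarrow> real) \<Rightarrow> nat \<Rightarrow> nat \<Rightarrow> nat set" where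
  "Vit Q1 Q2 d t = snd (UV Q1 Q2 d t)"

end

theory Submission
  imports Defs
begin

text \<open>Let \<open>b\<close> be the common ratio \<open>Q1 i / Q2 i\<close> on \<open>I0\<close>. For every \<open>V \<supseteq> I0\<close> and \<open>i \<in> I0\<close>
  we have \<open>R_i(V) = c_V Q2 i\<close> with \<open>c_V = b / \<Sum>V Q1 - 1 / \<Sum>V Q2\<close>, so all of \<open>I0\<close> carries the
  sign of \<open>c_V\<close>; as \<open>I0\<close> is a majority of \<open>V\<close>, so does the median. Hence a step removes exactly
  the components whose sign differs from that of \<open>c_V\<close>, never one of \<open>I0\<close>. It removes
  something as long as \<open>V \<noteq> I0\<close>: if \<open>c_V \<noteq> 0\<close> because the \<open>R_i(V)\<close> sum to zero, and if
  \<open>c_V = 0\<close> because then \<open>R_i(V) = 0\<close> iff \<open>Q1 i = b Q2 i\<close>, i.e. iff \<open>i\<close> is not differential.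
  So \<open>V\<close> shrinks strictly down to \<open>I0\<close> within \<open>|I1|\<close> steps.\<close>

lemma sorted_nth_mem_if_majority:
  fixes ys :: "'a::linorder list"
  assumes sorted: "sorted ys"
    and order_convex: "\<And>x y z. x \<in> S \<Longrightarrow> z \<in> S \<Longrightarrow> x \<le> y \<Longrightarrow> y \<le> z \<Longrightarrow> y \<in> S"
    and majority: "length ys < 2 * length (filter (\<lambda>x. x \<in> S) ys)"
    and j: "length ys \<le> 2 * j + 2" "2 * j \<le> length ys"
  shows "ys ! j \<in> S"
proof -
  let ?A = "{i. i < length ys \<and> ys ! i \<in> S}"
  have card_A: "length ys < 2 * card ?A"
    using majority by (simp add: length_filter_conv_card)
  have "\<not> ?A \<subseteq> {j<..<length ys}"
  proof
    assume "?A \<subseteq> {j<..<length ys}"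
    then have "card ?A \<le> length ys - Suc j"
      by (metis card_greaterThanLessThan card_mono finite_greaterThanLessThan)
    then show False using card_A j by linarith
  qed
  then obtain i where i: "i \<le> j" "i < length ys" "ys ! i \<in> S" by (auto simp: subset_iff not_less)
  have "\<not> ?A \<subseteq> {..<j}"
  proof
    assume "?A \<subseteq> {..<j}"
    then have "card ?A \<le> j" by (metis card_lessThan card_mono finite_lessThan)
    then show False using card_A j by linarith
  qed
  then obtain k where k: "j \<le> k" "k < length ys" "ys ! k \<in> S" by (auto simp: subset_iff not_less)
  have "ys ! i \<le> ys ! j" "ys ! j \<le> ys ! k"
    using sorted i k by (auto intro: sorted_nth_mono)
  then show ?thesis using order_convex i k by blast
qed

lemma median_mem_if_majority:
  fixes xs :: "real list"
  assumes order_convex: "\<And>x y z. x \<in> S \<Longrightarrow> z \<in> S \<Longrightarrow> x \<le> y \<Longrightarrow> y \<le> z \<Longrightarrow> y \<in> S"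
    and majority: "length xs < 2 * length (filter (\<lambda>x. x \<in> S) xs)"
  shows "median xs \<in> S"
proof -
  let ?ys = "sort xs" and ?n = "length xs"
  have maj: "length ?ys < 2 * length (filter (\<lambda>x. x \<in> S) ?ys)"
    using majority by (simp add: filter_sort)
  have hi: "?ys ! (?n div 2) \<in> S"
    by (rule sorted_nth_mem_if_majority[OF sorted_sort order_convex maj]) auto
  show ?thesis
  proof (cases "odd ?n")
    case True
    then show ?thesis using hi by (simp add: median_def Let_def)
  next
    case False
    have lo: "?ys ! (?n div 2 - 1) \<in> S"
      by (rule sorted_nth_mem_if_majority[OF sorted_sort order_convex maj]) (use False in auto)
    have "xs \<noteq> []" using majority by auto
    then have "?ys ! (?n div 2 - 1) \<le> ?ys ! (?n div 2)"
      by (intro sorted_nth_mono) auto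
    then have "(?ys ! (?n div 2 - 1) + ?ys ! (?n div 2)) / 2 \<in> S"
      using order_convex[OF lo hi] by simp
    then show ?thesis using False by (simp add: median_def Let_def)
  qed
qed

lemma Mval_mem_if_majority:
  assumes "finite V" "I \<subseteq> V" "card V < 2 * card I"
    and "\<And>i. i \<in> I \<Longrightarrow> Rval Q1 Q2 V i \<in> S"
    and "\<And>x y z. x \<in> S \<Longrightarrow> z \<in> S \<Longrightarrow> x \<le> y \<Longrightarrow> y \<le> z \<Longrightarrow> y \<in> S"
  shows "Mval Q1 Q2 V \<in> S"
  unfolding Mval_def
proof (rule median_mem_if_majority)
  have "card I \<le> card {i \<in> V. Rval Q1 Q2 V i \<in> S}"
    using assms by (intro card_mono) auto
  then show "length (map (Rval Q1 Q2 V) (sorted_list_of_set V))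
      < 2 * length (filter (\<lambda>x. x \<in> S) (map (Rval Q1 Q2 V) (sorted_list_of_set V)))"
    using assms by (simp add: filter_map distinct_length_filter Int_def conj_commute)
qed (use assms in blast)

lemma Wstep_eq_sgn: "Wstep Q1 Q2 V = {i \<in> V. sgn (Rval Q1 Q2 V i) \<noteq> sgn (Mval Q1 Q2 V)}"
  by (auto simp: Wstep_def Wplus_def Wminus_def Wzero_def sgn_if)

lemma sum_Rval_eq_0:
  assumes "sum Q1 V \<noteq> 0" "sum Q2 V \<noteq> 0"
  shows "sum (Rval Q1 Q2 V) V = 0"
  using assms by (simp add: Rval_def sum_subtractf sum_divide_distrib[symmetric])

lemma Rval_eq_0_iff:
  assumes "sum Q1 V = b * sum Q2 V" "b \<noteq> 0" "sum Q2 V \<noteq> 0"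
  shows "Rval Q1 Q2 V i = 0 \<longleftrightarrow> Q1 i = b * Q2 i"
  using assms by (auto simp: Rval_def field_simps)

lemma sgn_add_eq:
  fixes x y :: real
  shows "sgn x = s \<Longrightarrow> sgn y = s \<Longrightarrow> sgn (x + y) = s"
  by (cases x "0::real" rule: linorder_cases; cases y "0::real" rule: linorder_cases) auto

lemma sgn_between:
  fixes x y z :: real
  shows "sgn x = s \<Longrightarrow> sgn z = s \<Longrightarrow> x \<le> y \<Longrightarrow> y \<le> z \<Longrightarrow> sgn y = s"
  by (cases x "0::real" rule: linorder_cases; cases z "0::real" rule: linorder_cases) auto

lemma sgn_sum_eq:
  fixes f :: "'a \<Rightarrow> real"
  assumes "finite A" "A \<noteq> {}" "\<And>i. i \<in> A \<Longrightarrow> sgn (f i) = s"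
  shows "sgn (sum f A) = s"
  using assms by (induction A rule: finite_ne_induct) (auto intro: sgn_add_eq)

lemma Vit_0: "Vit Q1 Q2 d 0 = {1..d}"
  by (simp add: Vit_def)

lemma Vit_Suc: "Vit Q1 Q2 d (Suc t) = Vit Q1 Q2 d t - Wstep Q1 Q2 (Vit Q1 Q2 d t)"
  by (simp add: Vit_def Let_def split: prod.split)

lemma Uit_Suc: "Uit Q1 Q2 d (Suc t) = Uit Q1 Q2 d t \<union> Wstep Q1 Q2 (Vit Q1 Q2 d t)"
  by (simp add: Uit_def Vit_def Let_def split: prod.split)

lemma Uit_eq_diff_Vit: "Uit Q1 Q2 d t = {1..d} - Vit Q1 Q2 d t \<and> Vit Q1 Q2 d t \<subseteq> {1..d}"
proof (induction t)
  case 0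
  then show ?case by (simp add: Uit_def Vit_def)
next
  case (Suc t)
  have "Wstep Q1 Q2 (Vit Q1 Q2 d t) \<subseteq> Vit Q1 Q2 d t" by (auto simp: Wstep_eq_sgn)
  then show ?case using Suc by (auto simp: Uit_Suc Vit_Suc)
qed

lemma removal_iteration_reaches_core:
  fixes V :: "nat \<Rightarrow> 'a set" and W :: "'a set \<Rightarrow> 'a set"
  assumes "finite X" "I \<subseteq> X"
    and V_0: "V 0 = X" and V_Suc: "\<And>t. V (Suc t) = V t - W (V t)"
    and removes_outside: "\<And>A. I \<subseteq> A \<Longrightarrow> A \<subseteq> X \<Longrightarrow> W A \<subseteq> A - I"
    and progress: "\<And>A. I \<subseteq> A \<Longrightarrow> A \<subseteq> X \<Longrightarrow> A \<noteq> I \<Longrightarrow> W A \<noteq> {}"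
  obtains T where "V T = I" "W (V T) = {}" "\<And>t. t < T \<Longrightarrow> W (V t) \<noteq> {}"
    "T \<le> card (X - I)"
proof -
  have inv: "I \<subseteq> V t \<and> V t \<subseteq> X" for t
    by (induction t) (use removes_outside in \<open>auto simp: V_0 V_Suc \<open>I \<subseteq> X\<close>\<close>)
  have decrease: "card (V t - I) + t \<le> card (X - I)" if "\<forall>s<t. V s \<noteq> I" for t
    using that
  proof (induction t)
    case 0
    then show ?case by (simp add: V_0)
  next
    case (Suc t)
    have "V t \<noteq> I" using Suc.prems by simp
    then have "W (V t) \<noteq> {}" "W (V t) \<subseteq> V t - I"
      using inv progress removes_outside by auto
    moreover have "finite (V t - I)" using inv \<open>finite X\<close> finite_subset by blast
    ultimately have "card (V (Suc t) - I) < card (V t - I)"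
      unfolding V_Suc by (intro psubset_card_mono) auto
    then show ?case using Suc by simp
  qed
  have "\<exists>t. V t = I"
    using decrease[of "Suc (card (X - I))"] by auto
  define T where "T = (LEAST t. V t = I)"
  have "V T = I" unfolding T_def using \<open>\<exists>t. V t = I\<close> by (rule LeastI_ex)
  moreover have "V t \<noteq> I" if "t < T" for t
    using not_less_Least[of t "\<lambda>t. V t = I"] that unfolding T_def by blast
  moreover have "W I = {}" using removes_outside[OF order_refl \<open>I \<subseteq> X\<close>] by blast
  ultimately show ?thesis using decrease[of T] inv progress that by auto
qed

locale dominant_reference_set =
  fixes Q1 Q2 :: "nat \<Rightarrow> real" and d :: nat and I0 :: "nat set" and b :: real
  assumes nonneg1: "\<And>i. i \<in> {1..d} \<Longrightarrow> Q1 i \<ge> 0"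
    and nonneg2: "\<And>i. i \<in> {1..d} \<Longrightarrow> Q2 i \<ge> 0"
    and pos: "\<And>i. i \<in> {1..d} \<Longrightarrow> Q1 i + Q2 i > 0"
    and I0_sub: "I0 \<subseteq> {1..d}"
    and b_pos: "b > 0"
    and ratio: "\<And>i. i \<in> I0 \<Longrightarrow> Q1 i = b * Q2 i"
    and differential: "\<And>i. i \<in> {1..d} - I0 \<Longrightarrow> is_differential Q1 Q2 I0 i"
    and majority: "d < 2 * card I0"
begin

definition gap :: "nat set \<Rightarrow> real" where
  "gap V = b / sum Q1 V - 1 / sum Q2 V"

lemma Q2_pos: "i \<in> I0 \<Longrightarrow> Q2 i > 0"
  using pos[of i] nonneg2[of i] ratio[of i] b_pos I0_sub
  by (cases "Q2 i = 0") auto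

lemma sums_pos:
  assumes "I0 \<subseteq> V" "V \<subseteq> {1..d}"
  shows "sum Q1 V > 0" "sum Q2 V > 0"
proof -
  have "finite I0" "I0 \<noteq> {}" "finite V"
    using I0_sub majority assms finite_subset by fastforce+
  moreover have "Q1 i > 0" if "i \<in> I0" for i
    using Q2_pos[OF that] ratio[OF that] b_pos by simp
  ultimately have "0 < sum Q1 I0" "0 < sum Q2 I0"
    using Q2_pos by (auto intro: sum_pos)
  moreover have "sum Q1 I0 \<le> sum Q1 V" "sum Q2 I0 \<le> sum Q2 V"
    using assms nonneg1 nonneg2 \<open>finite V\<close> by (intro sum_mono2; force)+
  ultimately show "sum Q1 V > 0" "sum Q2 V > 0" by linarith+
qed

lemma Rval_reference: "i \<in> I0 \<Longrightarrow> Rval Q1 Q2 V i = gap V * Q2 i"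
  using ratio[of i] by (simp add: Rval_def gap_def algebra_simps)

lemma sgn_Rval_reference: "i \<in> I0 \<Longrightarrow> sgn (Rval Q1 Q2 V i) = sgn (gap V)"
  using Q2_pos[of i] by (simp add: Rval_reference sgn_mult)

lemma sgn_Mval:
  assumes "I0 \<subseteq> V" "V \<subseteq> {1..d}"
  shows "sgn (Mval Q1 Q2 V) = sgn (gap V)"
proof -
  have "card V \<le> d" using card_mono[OF _ assms(2)] by simp
  then have "Mval Q1 Q2 V \<in> {x. sgn x = sgn (gap V)}"
    using assms majority finite_subset[OF assms(2)] sgn_Rval_reference
    by (intro Mval_mem_if_majority) (auto intro: sgn_between)
  then show ?thesis by simp
qed

lemma Wstep_reference:
  assumes "I0 \<subseteq> V" "V \<subseteq> {1..d}"
  shows "Wstep Q1 Q2 V = {i \<in> V. sgn (Rval Q1 Q2 V i) \<noteq> sgn (gap V)}"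
  using sgn_Mval[OF assms] by (simp add: Wstep_eq_sgn)

lemma Wstep_subset_diff:
  assumes "I0 \<subseteq> V" "V \<subseteq> {1..d}"
  shows "Wstep Q1 Q2 V \<subseteq> V - I0"
  using sgn_Rval_reference by (auto simp: Wstep_reference[OF assms])

lemma Wstep_nonempty:
  assumes "I0 \<subseteq> V" "V \<subseteq> {1..d}" "V \<noteq> I0"
  shows "Wstep Q1 Q2 V \<noteq> {}"
proof (cases "gap V = 0")
  case True
  obtain i where i: "i \<in> V - I0" using assms by blast
  have "sum Q1 V = b * sum Q2 V"
    using True sums_pos[OF assms(1,2)] by (simp add: gap_def field_simps)
  moreover have "sum Q1 I0 = b * sum Q2 I0" "sum Q2 I0 > 0"
    using ratio sums_pos[of I0] I0_sub by (auto simp: sum_distrib_left)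
  moreover have "Rval Q1 Q2 I0 i \<noteq> 0"
    using differential[of i] i assms(2) by (auto simp: is_differential_def Rval_def)
  ultimately have "Rval Q1 Q2 V i \<noteq> 0"
    using Rval_eq_0_iff b_pos sums_pos[OF assms(1,2)] by (metis less_irrefl)
  then show ?thesis using i True by (auto simp: Wstep_reference[OF assms(1,2)] sgn_0_0)
next
  case False
  show ?thesis
  proof
    assume "Wstep Q1 Q2 V = {}"
    then have "sgn (sum (Rval Q1 Q2 V) V) = sgn (gap V)"
      using assms finite_subset[OF assms(2)]
      by (intro sgn_sum_eq) (auto simp: Wstep_reference[OF assms(1,2)])
    moreover have "sum (Rval Q1 Q2 V) V = 0"
      using sums_pos[OF assms(1,2)] by (simp add: sum_Rval_eq_0)
    ultimately show False using False by (simp add: sgn_0_0)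
  qed
qed

end

theorem theorem1:
  fixes Q1 Q2 :: "nat \<Rightarrow> real" and d :: nat and I0 I1 :: "nat set"
  assumes nonneg1: "\<forall>i\<in>{1..d}. Q1 i \<ge> 0"
    and nonneg2: "\<forall>i\<in>{1..d}. Q2 i \<ge> 0"
    and pos: "\<forall>i\<in>{1..d}. Q1 i + Q2 i > 0"
    and I0_sub: "I0 \<subseteq> {1..d}"
    and I0_ref: "is_reference_set Q1 Q2 I0"
    and I0_largest: "\<forall>i\<in>{1..d} - I0. is_differential Q1 Q2 I0 i"
    and I1_def: "I1 = {1..d} - I0"
    and majority: "real (card I0) > real d / 2"
  shows "\<exists>T. Wstep Q1 Q2 (Vit Q1 Q2 d T) = {}
            \<and> (\<forall>t<T. Wstep Q1 Q2 (Vit Q1 Q2 d t) \<noteq> {})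
            \<and> T \<le> card I1 + 1
            \<and> Vit Q1 Q2 d T = I0
            \<and> Uit Q1 Q2 d T = I1"
proof -
  obtain b where "b > 0" "\<forall>i\<in>I0. Q1 i = b * Q2 i"
    using I0_ref unfolding is_reference_set_def by blast
  then interpret dominant_reference_set Q1 Q2 d I0 b
    using assms by unfold_locales auto
  obtain T where "Vit Q1 Q2 d T = I0" "Wstep Q1 Q2 (Vit Q1 Q2 d T) = {}"
    "\<And>t. t < T \<Longrightarrow> Wstep Q1 Q2 (Vit Q1 Q2 d t) \<noteq> {}" "T \<le> card I1"
    using removal_iteration_reaches_core[OF finite_atLeastAtMost I0_sub Vit_0 Vit_Suc
        Wstep_subset_diff Wstep_nonempty]
    unfolding I1_def by blast
  then show ?thesis
    using Uit_eq_diff_Vit[of Q1 Q2 d T] I1_def by (intro exI[of _ T]) auto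
qed

end
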